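(* For every subinterval $I$ of $(e/(e+1),1]$ with rational endpoints, with $I^\tau=\{1-e(1-t):t\in I\}$, we have $\mathfrak s^0_{\rm rig}(\mathfrak Y_{\rm rig}I)\subseteq\pi_{2,\rm rig}^{-1}(\mathfrak Y_{\rm rig}I^\tau)$; more precisely, $$\mathfrak s^0_{\rm rig}(\mathfrak Y_{\rm rig}I)=\pi_{2,\rm rig}^{-1}(\mathfrak Y_{\rm rig}I^\tau)\cap\pi_{1,\rm rig}^{-1}(\mathfrak Y_{\rm rig}I).$$
   Context: $p$ prime; $L_0/\mathbb Q_p$ finite, ring of integers $\mathcal O_0$, uniformizer $\varpi$, residue field $\kappa\cong\mathbb F_q$; $\mathrm{val}(\varpi)=1$. $X,Y$ curves over $\mathcal O_0$ (reduced, flat separated finite type, connected one-dimensional geometric fibres), $\pi:Y\to X$ with: $X$ smooth; $Y$ regular; $\pi\otimes\kappa$ has a section $s$; $Y\otimes\kappa$ reduced with two components meeting at $\kappa$-rational points with completed local ring $\cong\kappa[[u,v]]/(uv)$, each singular point the only point over its image; $w$ an $\mathcal O_0$-automorphism of $Y$ whose reduction interchanges the components; $\pi$ finite flat of degree $1+e$, $e>1$. $\mathfrak X_{\rm rig},\mathfrak Y_{\rm rig}$ generic fibres of the formal completions. Measures of singularity (Goren–Kassaei): $\nu_{\mathfrak Y}$ on $\mathfrak Y_{\rm rig}$ (values in $\mathbb Q\cap[0,1]$; $0$/$1$ on points specializing to nonsingular points of $s(X\otimes\kappa)$/the other component; normalized annulus-parameter valuation on residue annuli of singular points) and $\nu_{\mathfrak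 X}$ on $\mathfrak X_{\rm rig}$; $\mathfrak Y_{\rm rig}I=\{\nu_{\mathfrak Y}\in I\}$. Known: if $\nu_{\mathfrak Y}(Q)<e/(e+1)$ ("canonical") then $\nu_{\mathfrak Y}(Q)=\nu_{\mathfrak X}(\pi_{\rm rig}Q)$, canonical points forming the image of a section $\mathfrak s_{\rm rig}:\mathfrak X_{\rm rig}[0,e/(e+1))\to\mathfrak Y_{\rm rig}[0,e/(e+1))$ of $\pi_{\rm rig}$; if $\nu_{\mathfrak Y}(Q)>e/(e+1)$ ("anti-canonical") then $\nu_{\mathfrak Y}(Q)=1-e^{-1}\nu_{\mathfrak X}(\pi_{\rm rig}Q)$; $\nu_{\mathfrak Y}(Q)=e/(e+1)$ iff $\nu_{\mathfrak X}(\pi_{\rm rig}Q)\ge e/(e+1)$; $\nu_{\mathfrak Y}(w_{\rm rig}Q)=1-\nu_{\mathfrak Y}(Q)$. $\mathfrak Y^0_{\rm rig}$ is a rigid curve over $L_0$ with finite flat $\pi_{1,\rm rig},\pi'_{1,\rm rig}:\mathfrak Y^0_{\rm rig}\to\mathfrak Y_{\rm rig}$, $\pi_{\rm rig}\pi_{1,\rm rig}=\pi_{\rm rig}\pi'_{1,\rm rig}$, $\pi_{1,\rm rig}(Q)\ne\pi'_{1,\rm rig}(Q)$ for all points $Q$ (so one canonical forces the other anti-canonical); $\pi_{2,\rm rig}:=w_{\rm rig}\pi'_{1,\rm rig}$. The commutative square with top arrow $\pi_{1,\rm rig}:(\pi'_{1,\rm rig})^{-1}(\mathfrak Y_{\rm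 rig}[0,e/(e+1)))\to\mathfrak Y_{\rm rig}(e/(e+1),1]$, left arrow $\pi'_{1,\rm rig}$ to $\mathfrak Y_{\rm rig}[0,e/(e+1))$, and $\pi_{\rm rig}$ from both of these to $\mathfrak X_{\rm rig}[0,e/(e+1))$ is a fibre product square; equivalently its top arrow is an isomorphism, whose inverse is denoted $\mathfrak s^0_{\rm rig}:\mathfrak Y_{\rm rig}(e/(e+1),1]\to\mathfrak Y^0_{\rm rig}$ (a section of $\pi_{1,\rm rig}$ with image $(\pi'_{1,\rm rig})^{-1}(\mathfrak Y_{\rm rig}[0,e/(e+1)))$). *)

theory Defs
  imports Complex_Main
begin

definition rat_interval :: "real set \<Rightarrow> bool" where
  "rat_interval I \<longleftrightarrow> (\<exists>a\<in>\<rat>. \<exists>b\<in>\<rat>.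
      I = {a..b} \<or> I = {a<..<b} \<or> I = {a..<b} \<or> I = {a<..b})"

text \<open>The region of a rigid space where a measure of singularity takes values in I.\<close>
definition region :: "('p \<Rightarrow> real) \<Rightarrow> real set \<Rightarrow> 'p set" where
  "region \<nu> I = {Q. \<nu> Q \<in> I}"

definition tau_interval :: "nat \<Rightarrow> real set \<Rightarrow> real set" where
  "tau_interval e I = (\<lambda>t. 1 - real e * (1 - t)) ` I"

end

theory Submission
  imports Defs
begin

text \<open>If pi1 R = Q is anti-canonical, then pi1' R lies over the same point of X and is
  canonical, so nu(pi1' R) = nuX(pi Q) = e (1 - nu Q) and applying w gives 1 - e (1 - nu Q).
  Conversely, nu(w (pi1' R)) \<in> I^tau forces nu(pi1' R) < e/(e+1), so R lies in the image
  of s0.\<close>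

lemma scaled_complement_less_threshold:
  fixes e t :: real
  assumes "0 < e" and "e / (e + 1) < t"
  shows "e * (1 - t) < e / (e + 1)"
proof -
  have "1 - t < 1 / (e + 1)"
    using assms by (simp add: field_simps)
  then have "e * (1 - t) < e * (1 / (e + 1))"
    using assms(1) by (rule mult_strict_left_mono)
  then show ?thesis by simp
qed

lemma image_region_subset_preimages:
  fixes e :: nat and c :: real
    and nuY :: "'y \<Rightarrow> real" and nuX :: "'x \<Rightarrow> real" and pi :: "'y \<Rightarrow> 'x" and w :: "'y \<Rightarrow> 'y"
    and pi1 pi1' :: "'y0 \<Rightarrow> 'y" and s0 :: "'y \<Rightarrow> 'y0"
  assumes "e \<noteq> 0"
    and canonical: "\<And>Q. nuY Q < c \<Longrightarrow> nuY Q = nuX (pi Q)"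
    and anticanonical: "\<And>Q. c < nuY Q \<Longrightarrow> nuY Q = 1 - nuX (pi Q) / e"
    and w_nu: "\<And>Q. nuY (w Q) = 1 - nuY Q"
    and pi_comm: "\<And>R. pi (pi1 R) = pi (pi1' R)"
    and s0_section: "\<And>Q. c < nuY Q \<Longrightarrow> pi1 (s0 Q) = Q"
    and s0_canonical: "\<And>Q. c < nuY Q \<Longrightarrow> nuY (pi1' (s0 Q)) < c"
    and I_sub: "I \<subseteq> {c<..}"
  shows "s0 ` region nuY I \<subseteq> (w \<circ> pi1') -` region nuY (tau_interval e I) \<inter> pi1 -` region nuY I"
proof
  fix R assume "R \<in> s0 ` region nuY I"
  then obtain Q where R: "R = s0 Q" and QI: "nuY Q \<in> I"
    unfolding region_def by auto
  have anti: "c < nuY Q" using QI I_sub by auto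
  have pi1_R: "pi1 R = Q" using s0_section[OF anti] R by simp
  have "nuY (pi1' R) = nuX (pi (pi1' R))"
    using canonical s0_canonical[OF anti] R by simp
  also have "\<dots> = nuX (pi Q)" using pi_comm pi1_R by metis
  also have "\<dots> = e * (1 - nuY Q)"
    using anticanonical[OF anti] \<open>e \<noteq> 0\<close> by (simp add: field_simps)
  finally have "nuY (w (pi1' R)) = 1 - e * (1 - nuY Q)" using w_nu by simp
  then have "nuY (w (pi1' R)) \<in> tau_interval e I"
    unfolding tau_interval_def using QI by auto
  then show "R \<in> (w \<circ> pi1') -` region nuY (tau_interval e I) \<inter> pi1 -` region nuY I"
    using pi1_R QI unfolding region_def by auto
qed

lemma preimages_subset_image_region:
  fixes e :: nat
    and nuY :: "'y \<Rightarrow> real" and w :: "'y \<Rightarrow> 'y"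
    and pi1 pi1' :: "'y0 \<Rightarrow> 'y" and s0 :: "'y \<Rightarrow> 'y0"
  assumes "e \<noteq> 0"
    and w_nu: "\<And>Q. nuY (w Q) = 1 - nuY Q"
    and s0_retraction: "\<And>R. nuY (pi1' R) < e / (e + 1) \<Longrightarrow> s0 (pi1 R) = R"
    and I_sub: "I \<subseteq> {e / (e + 1)<..}"
  shows "(w \<circ> pi1') -` region nuY (tau_interval e I) \<inter> pi1 -` region nuY I \<subseteq> s0 ` region nuY I"
proof
  fix R assume R: "R \<in> (w \<circ> pi1') -` region nuY (tau_interval e I) \<inter> pi1 -` region nuY I"
  then obtain t :: real where tI: "t \<in> I" and t: "nuY (w (pi1' R)) = 1 - e * (1 - t)"
    unfolding region_def tau_interval_def by auto
  have "nuY (pi1' R) = e * (1 - t)" using t w_nu by simp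
  also have "\<dots> < e / (e + 1)"
  proof -
    have "real e / (real e + 1) < t" using tI I_sub by (auto simp: add.commute)
    then show ?thesis using scaled_complement_less_threshold[of "real e" t] \<open>e \<noteq> 0\<close>
      by (simp add: add.commute)
  qed
  finally have "s0 (pi1 R) = R" by (rule s0_retraction)
  moreover have "pi1 R \<in> region nuY I" using R by auto
  ultimately show "R \<in> s0 ` region nuY I" by (metis image_eqI)
qed

theorem corollary2p8:
  fixes e :: nat
    and nuY :: "'y \<Rightarrow> real" and nuX :: "'x \<Rightarrow> real"
    and pi :: "'y \<Rightarrow> 'x" and w :: "'y \<Rightarrow> 'y"
    and s :: "'x \<Rightarrow> 'y"
    and pi1 pi1' :: "'y0 \<Rightarrow> 'y" and s0 :: "'y \<Rightarrow> 'y0"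
    and I :: "real set"
  assumes e_gt: "e > 1"
    and nuY_range: "\<And>Q. nuY Q \<in> \<rat> \<inter> {0..1}"
    and nuX_range: "\<And>P. nuX P \<in> \<rat> \<inter> {0..1}"
    and canonical: "\<And>Q. nuY Q < e / (e + 1) \<Longrightarrow> nuY Q = nuX (pi Q)"
    and section_pi: "\<And>P. nuX P < e / (e + 1) \<Longrightarrow> pi (s P) = P \<and> nuY (s P) < e / (e + 1)"
    and section_image: "\<And>Q. nuY Q < e / (e + 1) \<Longrightarrow> Q = s (pi Q)"
    and anticanonical: "\<And>Q. nuY Q > e / (e + 1) \<Longrightarrow> nuY Q = 1 - nuX (pi Q) / e"
    and middle: "\<And>Q. nuY Q = e / (e + 1) \<longleftrightarrow> nuX (pi Q) \<ge> e / (e + 1)"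
    and w_nu: "\<And>Q. nuY (w Q) = 1 - nuY Q"
    and pi_comm: "\<And>R. pi (pi1 R) = pi (pi1' R)"
    and pi1_ne: "\<And>R. pi1 R \<noteq> pi1' R"
    and s0_section: "\<And>Q. nuY Q > e / (e + 1) \<Longrightarrow> pi1 (s0 Q) = Q"
    and s0_image: "s0 ` {Q. nuY Q > e / (e + 1)} = {R. nuY (pi1' R) < e / (e + 1)}"
    and fibre_iso: "\<And>R. nuY (pi1' R) < e / (e + 1) \<Longrightarrow>
                        nuY (pi1 R) > e / (e + 1) \<and> s0 (pi1 R) = R"
    and I_rat: "rat_interval I"
    and I_sub: "I \<subseteq> {e / (e + 1) <.. 1}"
  shows "s0 ` region nuY I \<subseteq> (w \<circ> pi1') -` region nuY (tau_interval e I)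
       \<and> s0 ` region nuY I =
           (w \<circ> pi1') -` region nuY (tau_interval e I) \<inter> pi1 -` region nuY I"
proof -
  have "e \<noteq> 0" using e_gt by simp
  have I_anti: "I \<subseteq> {e / (e + 1)<..}" using I_sub by auto
  have s0_canonical: "nuY (pi1' (s0 Q)) < e / (e + 1)" if "nuY Q > e / (e + 1)" for Q
    using s0_image that by blast
  have s0_retraction: "s0 (pi1 R) = R" if "nuY (pi1' R) < e / (e + 1)" for R
    using fibre_iso that by blast
  have "s0 ` region nuY I \<subseteq> (w \<circ> pi1') -` region nuY (tau_interval e I) \<inter> pi1 -` region nuY I"
    using \<open>e \<noteq> 0\<close> canonical anticanonical w_nu pi_comm s0_section s0_canonical I_anti
    by (rule image_region_subset_preimages)
  moreover have "(w \<circ> pi1') -` region nuY (tau_interval e I) \<inter> pi1 -` region nuY I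
      \<subseteq> s0 ` region nuY I"
    using \<open>e \<noteq> 0\<close> w_nu s0_retraction I_anti by (rule preimages_subset_image_region)
  ultimately show ?thesis by blast
qed

end
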